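(* Consider the iterative minimum repairing algorithm IMR($p$) described in the context, but run with a static parameter: instead of re-estimating the parameter in step (S1), a fixed vector $\phi=(\phi_1,\dots,\phi_p)\in\mathbb{R}^p$ is used in every iteration, i.e. $\phi^{(k)}=\phi$ for all $k\ge 0$. Then the repair result converges, i.e. $$\lim_{k\to+\infty}\sum_{i=1}^n\left(y_i^{(k+1)}-y_i^{(k)}\right)=0.$$
   Context: Let $n\ge 1$ and let $x=(x_1,\dots,x_n)\in\mathbb{R}^n$ be an observed time series. A set $L\subseteq\{1,\dots,n\}$ of labeled indices is given, together with labeled (true) values $y^{(0)}_t$ for $t\in L$. For $t\notin L$ put $y^{(0)}_t=x_t$. Fix an order $p\ge 1$ and a threshold $\tau\ge 0$. The algorithm IMR($p$) produces sequences $y^{(k)}=(y^{(k)}_1,\dots,y^{(k)}_n)$, $k=0,1,2,\dots$; write $z^{(k)}_t=y^{(k)}_t-x_t$. In iteration $k$: (S1) a parameter $\phi^{(k)}=(\phi^{(k)}_1,\dots,\phi^{(k)}_p)$ is obtained (normally by ordinary least squares from $z^{(k)}$; here it is the fixed $\phi$). (S2) For each $t\in\{p+1,\dots,n\}\setminus L$ compute the candidate $\hat y^{(k)}_t=\sum_{i=1}^p\phi^{(k)}_i z^{(k)}_{t-i}+x_t$; index $t$ is a candidate only if $|\hat y^{(k)}_t-y^{(k)}_t|>\tau$. (S3) If there is at least one candidate, choose a candidate $t^*$ minimizing $|\hat y^{(k)}_t-x_t|$ (ties broken arbitrarily), set $y^{(k+1)}_{t^*}=\hat y^{(k)}_{t^*}$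 and $y^{(k+1)}_t=y^{(k)}_t$ for $t\ne t^*$. If there is no candidate, the algorithm terminates and we set $y^{(k+1)}=y^{(k)}$ (so the sequence is constant from then on). In particular labeled values and the first $p$ values are never modified. *)

theory Defs
  imports Complex_Main
begin

(* Series are functions nat => real, meaningful on indices 1..n.
   The parameter phi is a function nat => real, meaningful on indices 1..p. *)

definition imr_hat :: "(nat \<Rightarrow> real) \<Rightarrow> (nat \<Rightarrow> real) \<Rightarrow> nat \<Rightarrow> (nat \<Rightarrow> real) \<Rightarrow> nat \<Rightarrow> real" where
  "imr_hat x phi p y t = (\<Sum>i=1..p. phi i * (y (t - i) - x (t - i))) + x t"

definition imr_cand :: "nat \<Rightarrow> (nat \<Rightarrow> real) \<Rightarrow> nat set \<Rightarrow> (nat \<Rightarrow> real) \<Rightarrow> nat \<Rightarrow> real \<Rightarrow> (nat \<Rightarrow> real) \<Rightarrow> nat set" where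
  "imr_cand n x L phi p tau y =
     {t \<in> {p+1..n} - L. \<bar>imr_hat x phi p y t - y t\<bar> > tau}"

(* One iteration (S2)-(S3) of IMR(p) with parameter phi; ties broken arbitrarily,
   hence a relation rather than a function. *)
definition imr_step :: "nat \<Rightarrow> (nat \<Rightarrow> real) \<Rightarrow> nat set \<Rightarrow> (nat \<Rightarrow> real) \<Rightarrow> nat \<Rightarrow> real \<Rightarrow> (nat \<Rightarrow> real) \<Rightarrow> (nat \<Rightarrow> real) \<Rightarrow> bool" where
  "imr_step n x L phi p tau y y' \<longleftrightarrow>
     (imr_cand n x L phi p tau y = {} \<and> y' = y) \<or>
     (\<exists>t \<in> imr_cand n x L phi p tau y.
        (\<forall>s \<in> imr_cand n x L phi p tau y.
           \<bar>imr_hat x phi p y t - x t\<bar> \<le> \<bar>imr_hat x phi p y s - x s\<bar>) \<and>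
        y' = y(t := imr_hat x phi p y t))"

definition imr_init :: "(nat \<Rightarrow> real) \<Rightarrow> nat set \<Rightarrow> (nat \<Rightarrow> real) \<Rightarrow> (nat \<Rightarrow> real)" where
  "imr_init x L ylab = (\<lambda>t. if t \<in> L then ylab t else x t)"

end

theory Submission
  imports Defs
begin

text \<open>With a fixed parameter, each step of IMR rewrites a single unlabeled index \<open>t\<close> with a
  value that depends only on the entries before \<open>t\<close>. By strong induction on \<open>t\<close>, once all
  entries before \<open>t\<close> have settled, every later step leaves entry \<open>t\<close> alone or sets it to one
  fixed value, so entry \<open>t\<close> settles as well. Hence the whole repair becomes constant after
  finitely many steps, and its increments are eventually \<open>0\<close>. Neither the threshold, the
  initial values nor the tie-breaking rule plays any role.\<close>

lemma imr_hat_cong: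
  assumes "t \<ge> 1" and "\<And>s. s < t \<Longrightarrow> y s = y' s"
  shows "imr_hat x phi p y t = imr_hat x phi p y' t"
  unfolding imr_hat_def using assms by (intro arg_cong[where f="\<lambda>a. a + x t"] sum.cong) auto

lemma imr_step_cases:
  assumes "imr_step n x L phi p tau y y'"
  shows "y' = y \<or> (\<exists>t\<in>{p+1..n} - L. y' = y(t := imr_hat x phi p y t))"
  using assms unfolding imr_step_def imr_cand_def by auto

lemma eventually_const_if_steps_to:
  assumes "\<And>k. k \<ge> K \<Longrightarrow> a (Suc k) = a k \<or> a (Suc k) = h"
  shows "\<exists>c. \<forall>\<^sub>F k in sequentially. a k = c"
proof (cases "\<exists>k\<ge>K. a k = h")
  case True
  then obtain k\<^sub>0 where "k\<^sub>0 \<ge> K" "a k\<^sub>0 = h" by blast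
  have "a k = h" if "k \<ge> k\<^sub>0" for k
    using that
  proof (induction k rule: dec_induct)
    case (step m)
    then show ?case using assms[of m] \<open>k\<^sub>0 \<ge> K\<close> by auto
  qed fact
  then show ?thesis unfolding eventually_sequentially by blast
next
  case False
  have "a k = a K" if "k \<ge> K" for k
    using that by (induction k rule: dec_induct) (use assms False in force)+
  then show ?thesis unfolding eventually_sequentially by blast
qed

lemma single_updates_eventually_const:
  fixes Y :: "nat \<Rightarrow> nat \<Rightarrow> 'a"
  assumes step: "\<And>k. Y (Suc k) = Y k \<or> (\<exists>t\<in>C. Y (Suc k) = (Y k)(t := f (Y k) t))"
    and causal: "\<And>y y' t. t \<in> C \<Longrightarrow> (\<And>s. s < t \<Longrightarrow> y s = y' s) \<Longrightarrow> f y t = f y' t"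
  shows "\<exists>c. \<forall>\<^sub>F k in sequentially. Y k t = c"
proof (induction t rule: less_induct)
  case (less t)
  show ?case
  proof (cases "t \<in> C")
    case False
    have "Y k t = Y 0 t" for k
    proof (induction k)
      case (Suc k)
      then show ?case using step[of k] False by (auto simp: fun_upd_apply)
    qed simp
    then show ?thesis by (intro exI[of _ "Y 0 t"]) simp
  next
    case True
    have "\<forall>s\<in>{..<t}. \<exists>c. \<forall>\<^sub>F k in sequentially. Y k s = c"
      using less by blast
    then obtain c where "\<forall>s\<in>{..<t}. \<forall>\<^sub>F k in sequentially. Y k s = c s"
      by (metis bchoice)
    then have "\<forall>\<^sub>F k in sequentially. \<forall>s\<in>{..<t}. Y k s = c s"
      by (rule eventually_ball_finite[rotated]) simp
    then obtain K where K: "\<And>k s. k \<ge> K \<Longrightarrow> s < t \<Longrightarrow> Y k s = c s"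
      unfolding eventually_sequentially by blast
    have "Y (Suc k) t = Y k t \<or> Y (Suc k) t = f (Y K) t" if "k \<ge> K" for k
    proof -
      have "f (Y k) t = f (Y K) t"
        by (rule causal[OF True]) (simp add: K that)
      then show ?thesis
        using step[of k] by (cases "Y (Suc k) = Y k") (auto simp: fun_upd_apply split: if_splits)
    qed
    then show ?thesis by (rule eventually_const_if_steps_to)
  qed
qed

theorem proposition1:
  fixes n p :: nat and x ylab phi :: "nat \<Rightarrow> real" and L :: "nat set"
    and tau :: real and Y :: "nat \<Rightarrow> nat \<Rightarrow> real"
  assumes "n \<ge> 1" and "p \<ge> 1" and "tau \<ge> 0" and "L \<subseteq> {1..n}"
    and "Y 0 = imr_init x L ylab"
    and "\<And>k. imr_step n x L phi p tau (Y k) (Y (Suc k))"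
  shows "(\<lambda>k. \<Sum>i=1..n. Y (Suc k) i - Y k i) \<longlonglongrightarrow> 0"
proof -
  have "\<exists>c. \<forall>\<^sub>F k in sequentially. Y k i = c" for i
  proof (rule single_updates_eventually_const)
    show "Y (Suc k) = Y k \<or> (\<exists>t\<in>{p+1..n} - L. Y (Suc k) = (Y k)(t := imr_hat x phi p (Y k) t))" for k
      by (rule imr_step_cases) fact
    show "imr_hat x phi p y t = imr_hat x phi p y' t"
      if "t \<in> {p+1..n} - L" and "\<And>s. s < t \<Longrightarrow> y s = y' s" for y y' t
      using that by (intro imr_hat_cong) auto
  qed
  then obtain c where "\<forall>i. \<forall>\<^sub>F k in sequentially. Y k i = c i"
    by metis
  then have settled: "\<forall>\<^sub>F k in sequentially. \<forall>i\<in>{1..n}. Y k i = c i"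
    by (intro eventually_ball_finite) auto
  moreover have "\<forall>\<^sub>F k in sequentially. \<forall>i\<in>{1..n}. Y (Suc k) i = c i"
    using settled by (subst eventually_sequentially_Suc)
  ultimately have "\<forall>\<^sub>F k in sequentially. (\<Sum>i=1..n. Y (Suc k) i - Y k i) = 0"
    by eventually_elim simp
  then show ?thesis
    by (rule tendsto_eventually)
qed

end
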